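(* Let $k,a,b$ be integers with $k<a<b$. Let $G$ be a bipartite graph with classes $A=\{v_1,v_2,\dots,v_a\}$ and $B$, where $|B|=b$ and every vertex of $A$ has degree at least $b-k$ in $G$. Then for any non-negative integers $c_1,\dots,c_a$ with $\sum_{i=1}^a c_i \le b-k$, $G$ contains a star forest (a subgraph consisting of vertex-disjoint stars) in which, for every $i$, the vertex $v_i$ is the center of a star with exactly $c_i$ leaves (all leaves lying in $B$). *)

theory Defs
  imports Main
begin

definition bipartite_graph :: "('v \<Rightarrow> 'v \<Rightarrow> bool) \<Rightarrow> 'v set \<Rightarrow> 'v set \<Rightarrow> bool" where
  "bipartite_graph E A B \<longleftrightarrow> A \<inter> B = {} \<and> (\<forall>x y. E x y \<longleftrightarrow> E y x)
     \<and> (\<forall>x y. E x y \<longrightarrow> (x \<in> A \<and> y \<in> B) \<or> (x \<in> B \<and> y \<in> A))"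

definition degree :: "('v \<Rightarrow> 'v \<Rightarrow> bool) \<Rightarrow> 'v \<Rightarrow> nat" where
  "degree E x = card {y. E x y}"

end

theory Submission
  imports Defs
begin

text \<open>Greedy choice: the leaves are chosen centre by centre. When a centre is
  reached, the leaves already used number at most the sum of the earlier
  prescribed sizes, so it still has at least its own prescribed number of
  unused neighbours.\<close>

lemma disjoint_subsets_with_card:
  assumes "finite I" and "\<forall>i\<in>I. (\<Sum>j\<in>I. c j) \<le> card (N i)"
  shows "\<exists>L. (\<forall>i\<in>I. L i \<subseteq> N i \<and> finite (L i) \<and> card (L i) = c i)
           \<and> (\<forall>i\<in>I. \<forall>j\<in>I. i \<noteq> j \<longrightarrow> L i \<inter> L j = {})"
  using assms
proof (induction I rule: finite_induct)
  case empty
  show ?case by simp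
next
  case (insert x F)
  have "\<forall>i\<in>F. (\<Sum>j\<in>F. c j) \<le> card (N i)"
    using insert.prems insert.hyps by (auto simp: sum.insert)
  then obtain L where L: "\<forall>i\<in>F. L i \<subseteq> N i \<and> finite (L i) \<and> card (L i) = c i"
    and disj: "\<forall>i\<in>F. \<forall>j\<in>F. i \<noteq> j \<longrightarrow> L i \<inter> L j = {}"
    using insert.IH by blast
  define U where "U = (\<Union>i\<in>F. L i)"
  have "finite U"
    using L insert.hyps(1) by (simp add: U_def)
  have "card U \<le> (\<Sum>i\<in>F. c i)"
    using card_UN_le[OF insert.hyps(1), of L] L by (simp add: U_def)
  moreover have "(\<Sum>j\<in>F. c j) + c x \<le> card (N x)"
    using insert.prems insert.hyps by simp
  ultimately have "c x \<le> card (N x) - card U" by linarith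
  also have "\<dots> \<le> card (N x - U)"
    using diff_card_le_card_Diff[OF \<open>finite U\<close>] .
  finally obtain S where S: "S \<subseteq> N x - U" "card S = c x" "finite S"
    by (rule obtain_subset_with_card_n)
  have "\<forall>i\<in>F. S \<inter> L i = {}"
    using S(1) by (auto simp: U_def)
  then show ?case
    using L disj S insert.hyps(2)
    by (intro exI[of _ "L(x := S)"]) (auto simp: Int_commute)
qed

theorem claim9:
  fixes k :: int and a b :: nat and E :: "'v \<Rightarrow> 'v \<Rightarrow> bool"
    and v :: "nat \<Rightarrow> 'v" and A B :: "'v set" and c :: "nat \<Rightarrow> nat"
  assumes "k < int a" and "a < b"
    and "bipartite_graph E A B"
    and "inj_on v {1..a}" and "A = v ` {1..a}"
    and "finite B" and "card B = b"
    and "\<forall>i\<in>{1..a}. int (degree E (v i)) \<ge> int b - k"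
    and "int (\<Sum>i=1..a. c i) \<le> int b - k"
  shows "\<exists>L :: nat \<Rightarrow> 'v set.
           (\<forall>i\<in>{1..a}. L i \<subseteq> B \<and> card (L i) = c i \<and> (\<forall>y\<in>L i. E (v i) y))
         \<and> (\<forall>i\<in>{1..a}. \<forall>j\<in>{1..a}. i \<noteq> j \<longrightarrow> L i \<inter> L j = {})"
proof -
  define N where "N i = {y. E (v i) y}" for i
  have N_B: "N i \<subseteq> B" if "i \<in> {1..a}" for i
    using assms(3,5) that unfolding bipartite_graph_def N_def by blast
  have "\<forall>i\<in>{1..a}. (\<Sum>j=1..a. c j) \<le> card (N i)"
  proof
    fix i assume "i \<in> {1..a}"
    then have "int b - k \<le> int (card (N i))"
      using assms(8) by (simp add: N_def degree_def)
    then show "(\<Sum>j=1..a. c j) \<le> card (N i)"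
      using assms(9) by linarith
  qed
  then obtain L where L: "\<forall>i\<in>{1..a}. L i \<subseteq> N i \<and> finite (L i) \<and> card (L i) = c i"
    and disj: "\<forall>i\<in>{1..a}. \<forall>j\<in>{1..a}. i \<noteq> j \<longrightarrow> L i \<inter> L j = {}"
    using disjoint_subsets_with_card[of "{1..a}" c N] by auto
  have L_B: "L i \<subseteq> B \<and> (\<forall>y\<in>L i. E (v i) y)" if "i \<in> {1..a}" for i
  proof -
    have "L i \<subseteq> N i"
      using L that by blast
    then show ?thesis
      using N_B[OF that] by (auto simp: N_def)
  qed
  show ?thesis
    using L L_B disj by (intro exI[of _ L]) blast
qed

end
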